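(* (i) Let $p(\cdot):\mathbb{R}^n\to[1,\infty)$ be measurable and $1\le q,\alpha\le\infty$. If $p(x)\le\alpha\le q$ for all $x$, then $(L^{p(\cdot)},L^q)^\alpha(\mathbb{R}^n)\hookrightarrow(L^{p(\cdot)},L^q)(\mathbb{R}^n)$, i.e. $(L^{p(\cdot)},L^q)^\alpha(\mathbb{R}^n)\subset(L^{p(\cdot)},L^q)(\mathbb{R}^n)$ with $\|f\|_{(L^{p(\cdot)},L^q)}\lesssim\|f\|_{(L^{p(\cdot)},L^q)^\alpha}$. (ii) If $p(x)=\alpha$ for all $x$ and $q=\infty$, then $(L^{p(\cdot)},L^q)^\alpha(\mathbb{R}^n)$ is the Lebesgue space $L^{\alpha}(\mathbb{R}^n)$.
   Context: For measurable $p(\cdot):\mathbb{R}^n\to[1,\infty)$, $\|f\|_{L^{p(\cdot)}}=\inf\{\lambda>0:\int(|f(x)|/\lambda)^{p(x)}dx\le1\}$, and $L^{p(\cdot)}_{loc}$ is the set of $f$ with $f\chi_F\in L^{p(\cdot)}$ for every compact $F$. The variable amalgam space $(L^{p(\cdot)},L^q)(\mathbb{R}^n)$ is the set of $f\in L^{p(\cdot)}_{loc}$ with $\|f\|_{(L^{p(\cdot)},L^q)}=\big\|\,\|f\chi_{B(\cdot,1)}\|_{L^{p(\cdot)}}\big\|_{L^q}<\infty$ (the $L^q$ norm in the center variable). The variable Fofana space $(L^{p(\cdot)},L^q)^\alpha(\mathbb{R}^n)$ is the set of $f\in L^{p(\cdot)}_{loc}$ with $$\|f\|_{(L^{p(\cdot)},L^q)^\alpha}=\sup_{r>0}\Big\|\,|B(\cdot,r)|^{\frac1\alpha-\frac1{p(\cdot)}-\frac1q}\,\|f\chi_{B(\cdot,r)}\|_{L^{p(\cdot)}}\Big\|_{L^q(\mathbb{R}^n)}<\infty,$$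 where $B(x,r)$ is the open ball centered at $x$ and $|B(x,r)|$ its Lebesgue measure. *)

theory Defs
  imports "HOL-Analysis.Analysis" "HOL-Probability.Essential_Supremum"
begin

definition enn_powr :: "ennreal \<Rightarrow> real \<Rightarrow> ennreal" where
  "enn_powr x r = (if x = \<infinity> then \<infinity> else ennreal (enn2real x powr r))"

definition exp_recip :: "ennreal \<Rightarrow> real" where
  "exp_recip a = (if a = \<infinity> then 0 else 1 / enn2real a)"

definition var_modular :: "('a::euclidean_space \<Rightarrow> real) \<Rightarrow> ('a \<Rightarrow> real) \<Rightarrow> ennreal" where
  "var_modular p f = (\<integral>\<^sup>+ x. ennreal (\<bar>f x\<bar> powr p x) \<partial>lebesgue)"

text \<open>Luxemburg norm of the variable Lebesgue space L^{p(.)} (value infinity if the set is empty).\<close>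
definition var_norm :: "('a::euclidean_space \<Rightarrow> real) \<Rightarrow> ('a \<Rightarrow> real) \<Rightarrow> ennreal" where
  "var_norm p f = Inf {ennreal l | l. l > 0 \<and> var_modular p (\<lambda>x. f x / l) \<le> 1}"

definition var_Lp_loc :: "('a::euclidean_space \<Rightarrow> real) \<Rightarrow> ('a \<Rightarrow> real) set" where
  "var_Lp_loc p = {f. f \<in> borel_measurable lebesgue \<and>
      (\<forall>F. compact F \<longrightarrow> var_norm p (\<lambda>x. f x * indicator F x) < \<infinity>)}"

definition Lq_norm :: "ennreal \<Rightarrow> ('a::euclidean_space \<Rightarrow> ennreal) \<Rightarrow> ennreal" where
  "Lq_norm q g = (if q = \<infinity> then esssup lebesgue g
     else enn_powr (\<integral>\<^sup>+ x. enn_powr (g x) (enn2real q) \<partial>lebesgue) (1 / enn2real q))"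

definition amalgam_norm :: "('a::euclidean_space \<Rightarrow> real) \<Rightarrow> ennreal \<Rightarrow> ('a \<Rightarrow> real) \<Rightarrow> ennreal" where
  "amalgam_norm p q f = Lq_norm q (\<lambda>y. var_norm p (\<lambda>x. f x * indicator (ball y 1) x))"

definition amalgam_space :: "('a::euclidean_space \<Rightarrow> real) \<Rightarrow> ennreal \<Rightarrow> ('a \<Rightarrow> real) set" where
  "amalgam_space p q = {f. f \<in> var_Lp_loc p \<and> amalgam_norm p q f < \<infinity>}"

definition fofana_norm :: "('a::euclidean_space \<Rightarrow> real) \<Rightarrow> ennreal \<Rightarrow> ennreal \<Rightarrow> ('a \<Rightarrow> real) \<Rightarrow> ennreal" where
  "fofana_norm p q \<alpha> f = (SUP r\<in>{0<..}. Lq_norm q (\<lambda>y.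
      ennreal (measure lebesgue (ball y r) powr (exp_recip \<alpha> - 1 / p y - exp_recip q))
      * var_norm p (\<lambda>x. f x * indicator (ball y r) x)))"

definition fofana_space :: "('a::euclidean_space \<Rightarrow> real) \<Rightarrow> ennreal \<Rightarrow> ennreal \<Rightarrow> ('a \<Rightarrow> real) set" where
  "fofana_space p q \<alpha> = {f. f \<in> var_Lp_loc p \<and> fofana_norm p q \<alpha> f < \<infinity>}"

definition Leb_space :: "real \<Rightarrow> ('a::euclidean_space \<Rightarrow> real) set" where
  "Leb_space a = {f. f \<in> borel_measurable lebesgue \<and> (\<integral>\<^sup>+ x. ennreal (\<bar>f x\<bar> powr a) \<partial>lebesgue) < \<infinity>}"

definition Leb_norm :: "real \<Rightarrow> ('a::euclidean_space \<Rightarrow> real) \<Rightarrow> ennreal" where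
  "Leb_norm a f = enn_powr (\<integral>\<^sup>+ x. ennreal (\<bar>f x\<bar> powr a) \<partial>lebesgue) (1 / a)"

end

theory Submission
  imports Defs
begin

text \<open>
  For (i) it suffices to keep the single radius \<open>r = 1\<close> in the supremum defining the Fofana
  norm. The exponent \<open>1/\<alpha> - 1/p(y) - 1/q\<close> lies in \<open>[-2, 1]\<close> and the base \<open>|B(y,1)|\<close> is the
  volume of the unit ball, so the weight is bounded below by a positive constant; monotonicity
  and homogeneity of the \<open>L\<^sup>q\<close> norm then give the embedding, without using \<open>p \<le> \<alpha> \<le> q\<close>.

  For (ii) the weight is identically \<open>1\<close> and the Luxemburg norm is the \<open>L\<^sup>\<alpha>\<close> norm, so the Fofana
  norm is the supremum over \<open>r > 0\<close> of the essential supremum over \<open>y\<close> of the \<open>L\<^sup>\<alpha>\<close> norm of \<open>f\<close>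
  restricted to \<open>B(y, r)\<close>. Every such term is at most the \<open>L\<^sup>\<alpha>\<close> norm of \<open>f\<close>. Conversely, for \<open>y\<close>
  in the unit ball \<open>B(y, n + 1)\<close> contains \<open>B(0, n)\<close>, and monotone convergence in \<open>n\<close> recovers
  the full \<open>L\<^sup>\<alpha>\<close> norm.
\<close>

lemma enn_powr_mono:
  assumes "x \<le> y" "r > 0"
  shows "enn_powr x r \<le> enn_powr y r"
proof (cases "y = \<infinity>")
  case False
  then have "x \<noteq> \<infinity>" "enn2real x \<le> enn2real y"
    using assms(1) by (auto simp: top_unique enn2real_mono top.not_eq_extremum)
  with False assms(2) show ?thesis
    by (simp add: enn_powr_def powr_mono2 ennreal_leI)
qed (simp add: enn_powr_def)

lemma enn_powr_enn_powr_inverse: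
  assumes "r > 0"
  shows "enn_powr (enn_powr x r) (1 / r) = x"
  using assms by (cases "x = \<infinity>") (simp_all add: enn_powr_def powr_powr ennreal_enn2real_if)

lemma enn_powr_eq_top_iff [simp]: "enn_powr x r = top \<longleftrightarrow> x = top"
  by (simp add: enn_powr_def)

lemma enn_powr_cmult:
  assumes "c > 0" "r > 0"
  shows "enn_powr (ennreal c * x) r = ennreal (c powr r) * enn_powr x r"
proof (cases x)
  case (real t)
  with assms show ?thesis
    by (simp add: enn_powr_def ennreal_mult[symmetric] powr_mult)
qed (use assms in \<open>simp add: enn_powr_def ennreal_mult_top\<close>)

lemma enn_powr_measurable [measurable (raw)]:
  assumes "F \<in> borel_measurable M"
  shows "(\<lambda>y. enn_powr (F y) s) \<in> borel_measurable M"
  unfolding enn_powr_def using assms by measurable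

text \<open>No measurability is needed: dividing by \<open>c\<close> maps simple minorants of \<open>c * f\<close> to those of \<open>f\<close>.\<close>
lemma nn_integral_cmult_le:
  assumes "c > 0"
  shows "(\<integral>\<^sup>+x. ennreal c * f x \<partial>M) \<le> ennreal c * integral\<^sup>N M f"
  unfolding nn_integral_def[of M "\<lambda>x. ennreal c * f x"]
proof (rule SUP_least, clarify)
  fix g assume g: "simple_function M g" "g \<le> (\<lambda>x. ennreal c * f x)"
  define g' where "g' = (\<lambda>x. ennreal (1 / c) * g x)"
  have cancel: "ennreal c * ennreal (1 / c) = 1"
    using assms by (simp add: ennreal_mult[symmetric])
  have g': "simple_function M g'"
    unfolding g'_def using g(1) by (rule simple_function_compose1)
  have "g' \<le> f"
  proof (rule le_funI)
    fix x
    have "g' x \<le> ennreal (1 / c) * (ennreal c * f x)"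
      unfolding g'_def using g(2) by (simp add: le_fun_def mult_left_mono)
    also have "\<dots> = f x"
      using cancel by (simp add: mult.assoc[symmetric] mult.commute)
    finally show "g' x \<le> f x" .
  qed
  then have "integral\<^sup>S M g' \<le> integral\<^sup>N M f"
    unfolding nn_integral_def using g' by (auto intro: SUP_upper)
  have "integral\<^sup>S M g = integral\<^sup>S M (\<lambda>x. ennreal c * g' x)"
    unfolding g'_def using cancel by (simp add: mult.assoc[symmetric])
  also have "\<dots> = ennreal c * integral\<^sup>S M g'"
    using g' by simp
  also have "\<dots> \<le> ennreal c * integral\<^sup>N M f"
    using \<open>integral\<^sup>S M g' \<le> integral\<^sup>N M f\<close> by (rule mult_left_mono) simp
  finally show "integral\<^sup>S M g \<le> ennreal c * integral\<^sup>N M f" .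
qed

text \<open>The measurability premise is only needed for \<open>q = \<infinity>\<close>: the essential supremum of a
  non-measurable function is \<open>\<infinity>\<close>.\<close>
lemma Lq_norm_le_cmult:
  fixes g h :: "'a::euclidean_space \<Rightarrow> ennreal"
  assumes C: "C > 0" and q: "1 \<le> q"
    and le: "\<And>y. g y \<le> ennreal C * h y"
    and meas: "h \<in> borel_measurable lebesgue \<Longrightarrow> g \<in> borel_measurable lebesgue"
  shows "Lq_norm q g \<le> ennreal C * Lq_norm q h"
proof (cases "q = \<infinity>")
  case True
  show ?thesis
  proof (cases "h \<in> borel_measurable lebesgue")
    case True
    have "AE y in lebesgue. g y \<le> ennreal C * esssup lebesgue h"
      using esssup_AE[of h lebesgue]
      by eventually_elim (use le in \<open>meson mult_left_mono order_trans zero_le\<close>)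
    with meas[OF True] have "esssup lebesgue g \<le> ennreal C * esssup lebesgue h"
      by (rule esssup_I)
    with \<open>q = \<infinity>\<close> show ?thesis
      by (simp add: Lq_norm_def)
  qed (use True C in \<open>simp add: Lq_norm_def esssup_non_measurable ennreal_mult_top\<close>)
next
  case False
  define s where "s = enn2real q"
  have s: "s \<ge> 1"
    using enn2real_mono[OF q] False unfolding s_def by (simp add: top.not_eq_extremum)
  have "(\<integral>\<^sup>+y. enn_powr (g y) s \<partial>lebesgue)
      \<le> (\<integral>\<^sup>+y. ennreal (C powr s) * enn_powr (h y) s \<partial>lebesgue)"
    using s C by (intro nn_integral_mono) (simp add: enn_powr_mono[OF le] enn_powr_cmult[symmetric])
  also have "\<dots> \<le> ennreal (C powr s) * (\<integral>\<^sup>+y. enn_powr (h y) s \<partial>lebesgue)"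
    using C by (intro nn_integral_cmult_le) simp
  finally have "enn_powr (\<integral>\<^sup>+y. enn_powr (g y) s \<partial>lebesgue) (1 / s)
      \<le> enn_powr (ennreal (C powr s) * (\<integral>\<^sup>+y. enn_powr (h y) s \<partial>lebesgue)) (1 / s)"
    using s by (intro enn_powr_mono) auto
  also have "\<dots> = ennreal C * enn_powr (\<integral>\<^sup>+y. enn_powr (h y) s \<partial>lebesgue) (1 / s)"
    using s C by (simp add: enn_powr_cmult powr_powr)
  finally show ?thesis
    using False by (simp add: Lq_norm_def s_def)
qed

lemma exp_recip_in_unit_interval: "1 \<le> x \<Longrightarrow> exp_recip x \<in> {0..1}"
  by (cases "x = \<infinity>")
    (auto simp: exp_recip_def top.not_eq_extremum dest!: enn2real_mono[of 1 x])

lemma powr_ge_min_powr_endpoints: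
  fixes w :: real
  assumes "w > 0" "a \<le> e" "e \<le> b"
  shows "min (w powr a) (w powr b) \<le> w powr e"
proof (cases "w \<ge> 1")
  case True
  then have "w powr a \<le> w powr e" using assms by (intro powr_mono) auto
  then show ?thesis by linarith
next
  case False
  then have "w powr b \<le> w powr e" using assms by (intro powr_mono') auto
  then show ?thesis by linarith
qed

lemma measure_ball_translate:
  "measure lebesgue (ball (y::'a::euclidean_space) r) = measure lebesgue (ball (0::'a) r)"
  by (cases "r \<ge> 0") (simp_all add: content_ball_conv_unit_ball[of r y] content_ball_conv_unit_ball[of r 0] ball_empty)

lemma measurable_measure_ball_powr:
  assumes "e \<in> borel_measurable lebesgue"
  shows "(\<lambda>y. measure lebesgue (ball (y::'a::euclidean_space) r) powr e y) \<in> borel_measurable lebesgue"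
proof -
  have "(\<lambda>y. measure lebesgue (ball y r) powr e y) = (\<lambda>y. measure lebesgue (ball (0::'a) r) powr e y)"
  proof
    show "measure lebesgue (ball y r) powr e y = measure lebesgue (ball (0::'a) r) powr e y" for y
      using measure_ball_translate[of y r] by simp
  qed
  with assms show ?thesis
    by simp
qed

lemma unit_ball_weight_lower_bound:
  fixes p :: "'a::euclidean_space \<Rightarrow> real"
  assumes p_ge1: "\<And>x. 1 \<le> p x" and "1 \<le> q" "1 \<le> \<alpha>"
  obtains c where "c > 0"
    "\<And>y. c \<le> measure lebesgue (ball y 1) powr (exp_recip \<alpha> - 1 / p y - exp_recip q)"
proof
  define \<omega> where "\<omega> = measure lebesgue (ball (0::'a) 1)"
  have "\<omega> > 0"
    unfolding \<omega>_def using content_ball_pos[of 1 "0::'a"] by simp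
  then show "min (\<omega> powr -2) (\<omega> powr 1) > 0" by simp
  fix y
  have "0 < 1 / p y" "1 / p y \<le> 1"
    using p_ge1[of y] by auto
  moreover note exp_recip_in_unit_interval[OF \<open>1 \<le> q\<close>] exp_recip_in_unit_interval[OF \<open>1 \<le> \<alpha>\<close>]
  ultimately have "-2 \<le> exp_recip \<alpha> - 1 / p y - exp_recip q" "exp_recip \<alpha> - 1 / p y - exp_recip q \<le> 1"
    unfolding atLeastAtMost_iff by linarith+
  with \<open>\<omega> > 0\<close> show "min (\<omega> powr -2) (\<omega> powr 1)
      \<le> measure lebesgue (ball y 1) powr (exp_recip \<alpha> - 1 / p y - exp_recip q)"
    unfolding \<omega>_def measure_ball_translate[of y] by (rule powr_ge_min_powr_endpoints)
qed

lemma amalgam_norm_le_fofana_norm: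
  fixes p :: "'a::euclidean_space \<Rightarrow> real"
  assumes p_meas: "p \<in> borel_measurable lebesgue" and p_ge1: "\<And>x. 1 \<le> p x"
    and "1 \<le> q" "1 \<le> \<alpha>"
  shows "\<exists>C::real. C > 0 \<and> (\<forall>f. amalgam_norm p q f \<le> ennreal C * fofana_norm p q \<alpha> f)"
proof -
  obtain c where "c > 0"
    and c: "\<And>y. c \<le> measure lebesgue (ball y 1) powr (exp_recip \<alpha> - 1 / p y - exp_recip q)"
    by (rule unit_ball_weight_lower_bound[of p q \<alpha>, OF p_ge1 \<open>1 \<le> q\<close> \<open>1 \<le> \<alpha>\<close>])
      (rule that)
  define w where "w y = measure lebesgue (ball y 1) powr (exp_recip \<alpha> - 1 / p y - exp_recip q)" for y
  have c_le_w: "c \<le> w y" for y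
    unfolding w_def by (rule c)
  have w_pos: "w y > 0" for y
    unfolding w_def using content_ball_pos[of 1 y] by simp
  have w_meas: "w \<in> borel_measurable lebesgue"
    unfolding w_def[abs_def] using p_meas by (intro measurable_measure_ball_powr) auto
  have "amalgam_norm p q f \<le> ennreal (1 / c) * fofana_norm p q \<alpha> f" for f
  proof -
    define G where "G y = var_norm p (\<lambda>x. f x * indicator (ball y 1) x)" for y
    define h where "h y = ennreal (w y) * G y" for y
    have "Lq_norm q G \<le> ennreal (1 / c) * Lq_norm q h"
    proof (rule Lq_norm_le_cmult[OF _ \<open>1 \<le> q\<close>])
      fix y
      have "G y = ennreal (1 / c) * (ennreal c * G y)"
        using \<open>c > 0\<close> by (simp add: mult.assoc[symmetric] ennreal_mult[symmetric])
      also have "\<dots> \<le> ennreal (1 / c) * h y"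
        unfolding h_def using c_le_w[of y] by (intro mult_left_mono mult_right_mono ennreal_leI) auto
      finally show "G y \<le> ennreal (1 / c) * h y" .
    next
      assume "h \<in> borel_measurable lebesgue"
      moreover have "ennreal (1 / w y) * ennreal (w y) = 1" for y
        using w_pos[of y] by (simp flip: ennreal_mult)
      then have "G = (\<lambda>y. ennreal (1 / w y) * h y)"
        unfolding h_def by (simp add: mult.assoc[symmetric])
      ultimately show "G \<in> borel_measurable lebesgue"
        using w_meas by simp
    qed (use \<open>c > 0\<close> in simp)
    also have "Lq_norm q h \<le> fofana_norm p q \<alpha> f"
      unfolding fofana_norm_def h_def w_def G_def by (rule SUP_upper[where i = 1]) simp
    finally show ?thesis
      unfolding amalgam_norm_def G_def by (meson mult_left_mono order_trans zero_le)
  qed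
  with \<open>c > 0\<close> show ?thesis
    by (intro exI[of _ "1 / c"]) simp
qed

lemma fofana_space_subset_amalgam_space:
  fixes p :: "'a::euclidean_space \<Rightarrow> real"
  assumes "p \<in> borel_measurable lebesgue" "\<And>x. 1 \<le> p x" "1 \<le> q" "1 \<le> \<alpha>"
  shows "fofana_space p q \<alpha> \<subseteq> amalgam_space p q"
proof
  obtain C :: real where C: "\<And>f. amalgam_norm p q f \<le> ennreal C * fofana_norm p q \<alpha> f"
    using amalgam_norm_le_fofana_norm[of p q \<alpha>, OF assms] by blast
  fix f assume "f \<in> fofana_space p q \<alpha>"
  then have "f \<in> var_Lp_loc p" "ennreal C * fofana_norm p q \<alpha> f < \<infinity>"
    by (auto simp: fofana_space_def ennreal_mult_less_top)
  with C[of f] show "f \<in> amalgam_space p q"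
    by (auto simp: amalgam_space_def)
qed

lemma Inf_ennreal_pos_atLeast:
  assumes "c \<ge> 0"
  shows "Inf {ennreal l | l. l > 0 \<and> c \<le> l} = ennreal c"
proof (rule antisym)
  show "Inf {ennreal l | l. l > 0 \<and> c \<le> l} \<le> ennreal c"
  proof (cases "c = 0")
    case True
    show ?thesis
    proof (rule ennreal_le_epsilon)
      fix e :: real
      assume "0 < e"
      then have "Inf {ennreal l | l. l > 0 \<and> c \<le> l} \<le> ennreal e"
        using True by (intro Inf_lower) auto
      with True show "Inf {ennreal l | l. l > 0 \<and> c \<le> l} \<le> ennreal c + ennreal e"
        by simp
    qed
  next
    case False
    with assms show ?thesis
      by (intro Inf_lower) auto
  qed
qed (auto intro!: Inf_greatest ennreal_leI)

lemma powr_inverse_le_iff: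
  fixes t l a :: real
  assumes "t \<ge> 0" "l > 0" "a > 0"
  shows "t powr (1 / a) \<le> l \<longleftrightarrow> t \<le> l powr a"
proof
  assume "t powr (1 / a) \<le> l"
  then have "(t powr (1 / a)) powr a \<le> l powr a"
    using assms by (intro powr_mono2) auto
  with assms show "t \<le> l powr a"
    by (simp add: powr_powr)
next
  assume "t \<le> l powr a"
  then have "t powr (1 / a) \<le> (l powr a) powr (1 / a)"
    using assms by (intro powr_mono2) auto
  with assms show "t powr (1 / a) \<le> l"
    by (simp add: powr_powr)
qed

lemma var_modular_const_divide:
  assumes "f \<in> borel_measurable lebesgue" "a > 0" "l > 0"
  shows "var_modular (\<lambda>_. a) (\<lambda>x. f x / l)
    = ennreal (l powr -a) * (\<integral>\<^sup>+x. ennreal (\<bar>f x\<bar> powr a) \<partial>lebesgue)"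
proof -
  have "\<bar>f x / l\<bar> powr a = l powr -a * \<bar>f x\<bar> powr a" for x
    using assms(3) by (simp add: powr_divide powr_minus_divide)
  then have "var_modular (\<lambda>_. a) (\<lambda>x. f x / l)
      = (\<integral>\<^sup>+x. ennreal (l powr -a) * ennreal (\<bar>f x\<bar> powr a) \<partial>lebesgue)"
    unfolding var_modular_def by (simp add: ennreal_mult)
  also have "\<dots> = ennreal (l powr -a) * (\<integral>\<^sup>+x. ennreal (\<bar>f x\<bar> powr a) \<partial>lebesgue)"
    using assms(1) by (intro nn_integral_cmult) measurable
  finally show ?thesis .
qed

lemma var_norm_const_eq_Leb_norm:
  assumes f: "f \<in> borel_measurable lebesgue" and "a > 0"
  shows "var_norm (\<lambda>_. a) f = Leb_norm a f"
proof -
  define I where "I = (\<integral>\<^sup>+x. ennreal (\<bar>f x\<bar> powr a) \<partial>lebesgue)"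
  have var_norm_eq: "var_norm (\<lambda>_. a) f = Inf {ennreal l | l. l > 0 \<and> ennreal (l powr -a) * I \<le> 1}"
    unfolding var_norm_def I_def
    by (intro arg_cong[where f = Inf]) (auto simp: var_modular_const_divide[OF f \<open>a > 0\<close>])
  show ?thesis
  proof (cases I)
    case (real t)
    have "ennreal (l powr -a) * I \<le> 1 \<longleftrightarrow> t powr (1 / a) \<le> l" if "l > 0" for l
    proof -
      have "ennreal (l powr -a) * I \<le> 1 \<longleftrightarrow> t \<le> l powr a"
        using real \<open>l > 0\<close>
        by (simp add: ennreal_mult[symmetric] powr_minus field_simps flip: ennreal_1)
      also have "\<dots> \<longleftrightarrow> t powr (1 / a) \<le> l"
        using real \<open>a > 0\<close> \<open>l > 0\<close> by (simp add: powr_inverse_le_iff)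
      finally show ?thesis .
    qed
    then have "{ennreal l | l. l > 0 \<and> ennreal (l powr -a) * I \<le> 1}
        = {ennreal l | l. l > 0 \<and> t powr (1 / a) \<le> l}"
      by blast
    with real show ?thesis
      by (simp add: var_norm_eq Inf_ennreal_pos_atLeast Leb_norm_def I_def[symmetric] enn_powr_def)
  next
    case top
    then have "ennreal (l powr -a) * I = \<infinity>" if "l > 0" for l
      using that by (simp add: ennreal_mult_top)
    then have no_admissible: "{ennreal l | l. l > 0 \<and> ennreal (l powr -a) * I \<le> 1} = {}"
      by (auto simp: top_unique)
    have "var_norm (\<lambda>_. a) f = \<infinity>"
      unfolding var_norm_eq no_admissible by simp
    with top show ?thesis
      by (simp add: Leb_norm_def I_def[symmetric] enn_powr_def)
  qed
qed

lemma Leb_norm_mono: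
  assumes "a > 0" "\<And>x. \<bar>f x\<bar> \<le> \<bar>g x\<bar>"
  shows "Leb_norm a f \<le> Leb_norm a g"
  unfolding Leb_norm_def using assms
  by (intro enn_powr_mono nn_integral_mono ennreal_leI powr_mono2) auto

lemma Leb_norm_restrict:
  "Leb_norm a (\<lambda>x. f x * indicator A x)
    = enn_powr (\<integral>\<^sup>+x. ennreal (\<bar>f x\<bar> powr a) * indicator A x \<partial>lebesgue) (1 / a)"
  unfolding Leb_norm_def by (intro arg_cong2[where f = enn_powr] nn_integral_cong refl) (simp add: indicator_def)

lemma Leb_space_subset_var_Lp_loc:
  assumes "a > 0"
  shows "Leb_space a \<subseteq> var_Lp_loc (\<lambda>_. a)"
proof
  fix f :: "'a::euclidean_space \<Rightarrow> real"
  assume "f \<in> Leb_space a"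
  then have f: "f \<in> borel_measurable lebesgue" "Leb_norm a f < \<infinity>"
    by (auto simp: Leb_space_def Leb_norm_def less_top[symmetric])
  have "var_norm (\<lambda>_. a) (\<lambda>x. f x * indicator F x) < \<infinity>" if "compact F" for F
  proof -
    have [measurable]: "F \<in> sets lebesgue"
      using borel_compact[OF that] by simp
    have "(\<lambda>x. f x * indicator F x) \<in> borel_measurable lebesgue"
      using f(1) by measurable
    then have "var_norm (\<lambda>_. a) (\<lambda>x. f x * indicator F x) = Leb_norm a (\<lambda>x. f x * indicator F x)"
      using \<open>a > 0\<close> by (rule var_norm_const_eq_Leb_norm)
    also have "\<dots> \<le> Leb_norm a f"
      using \<open>a > 0\<close> by (intro Leb_norm_mono) (auto simp: indicator_def)
    also note f(2)
    finally show ?thesis .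
  qed
  with f(1) show "f \<in> var_Lp_loc (\<lambda>_. a)"
    by (simp add: var_Lp_loc_def)
qed

lemma measurable_nn_integral_ball:
  fixes u :: "'a::euclidean_space \<Rightarrow> ennreal"
  assumes "u \<in> borel_measurable lebesgue"
  shows "(\<lambda>y. \<integral>\<^sup>+x. u x * indicator (ball y r) x \<partial>lebesgue) \<in> borel_measurable lebesgue"
proof -
  obtain u' where u': "u' \<in> borel_measurable lborel" and "AE x in lborel. u x = u' x"
    using completion_ex_borel_measurable[of u lborel] assms by auto
  then have "(\<integral>\<^sup>+x. u x * indicator (ball y r) x \<partial>lebesgue)
      = (\<integral>\<^sup>+x. u' x * (if dist y x < r then 1 else 0) \<partial>lborel)" for y
    unfolding nn_integral_completion by (intro nn_integral_cong_AE) (auto simp: indicator_def)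
  moreover have "(\<lambda>y. \<integral>\<^sup>+x. u' x * (if dist y x < r then 1 else 0) \<partial>lborel) \<in> borel_measurable lborel"
    using u' by measurable
  ultimately show ?thesis
    by (simp add: measurable_completion)
qed

lemma measurable_Leb_norm_ball:
  assumes "f \<in> borel_measurable lebesgue"
  shows "(\<lambda>y. Leb_norm a (\<lambda>x. f x * indicator (ball y r) x)) \<in> borel_measurable lebesgue"
  unfolding Leb_norm_restrict using assms
  by (intro enn_powr_measurable measurable_nn_integral_ball) measurable

lemma nn_integral_SUP_ball:
  fixes u :: "'a::euclidean_space \<Rightarrow> ennreal"
  assumes "u \<in> borel_measurable lebesgue"
  shows "(SUP n. \<integral>\<^sup>+x. u x * indicator (ball 0 (real n)) x \<partial>lebesgue) = integral\<^sup>N lebesgue u"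
proof -
  have "(SUP n. u x * indicator (ball 0 (real n)) x) = u x" for x
  proof (rule antisym)
    obtain n :: nat where "norm x < real n"
      using reals_Archimedean2 by blast
    then show "u x \<le> (SUP n. u x * indicator (ball 0 (real n)) x)"
      by (intro SUP_upper2[of n]) auto
  qed (auto intro!: SUP_least simp: indicator_def)
  then have "integral\<^sup>N lebesgue u = (\<integral>\<^sup>+x. (SUP n. u x * indicator (ball 0 (real n)) x) \<partial>lebesgue)"
    by simp
  also have "\<dots> = (SUP n. \<integral>\<^sup>+x. u x * indicator (ball 0 (real n)) x \<partial>lebesgue)"
  proof (rule nn_integral_monotone_convergence_SUP)
    show "incseq (\<lambda>n x. u x * indicator (ball 0 (real n)) x)"
      by (intro incseq_SucI le_funI) (auto simp: indicator_def)
  qed (use assms in \<open>auto intro!: borel_measurable_times_ennreal borel_measurable_indicator\<close>)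
  finally show ?thesis ..
qed

lemma Leb_norm_le_if_balls_le:
  assumes f: "f \<in> borel_measurable lebesgue" and "a > 0"
    and le: "\<And>n::nat. Leb_norm a (\<lambda>x. f x * indicator (ball 0 (real n)) x) \<le> S"
  shows "Leb_norm a f \<le> S"
proof -
  define u where "u = (\<lambda>x. ennreal (\<bar>f x\<bar> powr a))"
  have ball_le: "(\<integral>\<^sup>+x. u x * indicator (ball 0 (real n)) x \<partial>lebesgue) \<le> enn_powr S a" for n
  proof -
    have "enn_powr (Leb_norm a (\<lambda>x. f x * indicator (ball 0 (real n)) x)) a \<le> enn_powr S a"
      using le \<open>a > 0\<close> by (rule enn_powr_mono)
    then show ?thesis
      using enn_powr_enn_powr_inverse[of "1 / a"] \<open>a > 0\<close> by (simp add: Leb_norm_restrict u_def)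
  qed
  have "u \<in> borel_measurable lebesgue"
    unfolding u_def using f by measurable
  then have "integral\<^sup>N lebesgue u = (SUP n. \<integral>\<^sup>+x. u x * indicator (ball 0 (real n)) x \<partial>lebesgue)"
    by (rule nn_integral_SUP_ball[symmetric])
  also have "\<dots> \<le> enn_powr S a"
    by (rule SUP_least) (rule ball_le)
  finally have "enn_powr (integral\<^sup>N lebesgue u) (1 / a) \<le> enn_powr (enn_powr S a) (1 / a)"
    using \<open>a > 0\<close> by (intro enn_powr_mono) auto
  then show ?thesis
    using \<open>a > 0\<close> by (simp add: Leb_norm_def u_def enn_powr_enn_powr_inverse)
qed

lemma le_esssupI:
  fixes h :: "'b \<Rightarrow> ennreal"
  assumes "A \<in> sets M" "emeasure M A \<noteq> 0" and le: "\<And>y. y \<in> A \<Longrightarrow> c \<le> h y"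
  shows "c \<le> esssup M h"
proof (rule ccontr)
  assume "\<not> c \<le> esssup M h"
  then have "esssup M h < c"
    by simp
  have "AE y in M. y \<notin> A"
    using esssup_AE[of h M] by eventually_elim (use le \<open>esssup M h < c\<close> in fastforce)
  then have "A \<in> null_sets M"
    using AE_iff_null_sets[OF assms(1)] by simp
  with assms(2) show False
    by auto
qed

lemma fofana_norm_const_exponent:
  assumes f: "f \<in> borel_measurable lebesgue" and "a > 0"
  shows "fofana_norm (\<lambda>_. a) \<infinity> (ennreal a) f
    = (SUP r\<in>{0<..}. esssup lebesgue (\<lambda>y. Leb_norm a (\<lambda>x. f x * indicator (ball y r) x)))"
proof -
  have [measurable]: "ball y r \<in> sets lebesgue" for y :: 'a and r
    by simp
  have "ennreal (measure lebesgue (ball y r) powr (exp_recip (ennreal a) - 1 / a - exp_recip \<infinity>))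
      * var_norm (\<lambda>_. a) (\<lambda>x. f x * indicator (ball y r) x)
    = Leb_norm a (\<lambda>x. f x * indicator (ball y r) x)" if "r > 0" for y :: 'a and r
  proof -
    have "measure lebesgue (ball y r) \<noteq> 0"
      using content_ball_pos[OF \<open>r > 0\<close>, of y] by simp
    moreover have "(\<lambda>x. f x * indicator (ball y r) x) \<in> borel_measurable lebesgue"
      using f by measurable
    ultimately show ?thesis
      using \<open>a > 0\<close> by (simp add: exp_recip_def var_norm_const_eq_Leb_norm)
  qed
  then show ?thesis
    unfolding fofana_norm_def Lq_norm_def by (auto intro!: SUP_cong arg_cong[where f = "esssup lebesgue"])
qed

lemma fofana_norm_const_exponent_le_Leb_norm:
  assumes f: "f \<in> borel_measurable lebesgue" and "a > 0"
  shows "fofana_norm (\<lambda>_. a) \<infinity> (ennreal a) f \<le> Leb_norm a f"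
  unfolding fofana_norm_const_exponent[OF assms]
proof (intro SUP_least esssup_I AE_I2)
  show "(\<lambda>y. Leb_norm a (\<lambda>x. f x * indicator (ball y r) x)) \<in> borel_measurable lebesgue" for r
    using f by (rule measurable_Leb_norm_ball)
  show "Leb_norm a (\<lambda>x. f x * indicator (ball y r) x) \<le> Leb_norm a f" for y r
    using \<open>a > 0\<close> by (intro Leb_norm_mono) (auto simp: indicator_def)
qed

lemma Leb_norm_le_fofana_norm_const_exponent:
  assumes f: "f \<in> borel_measurable lebesgue" and "a > 0"
  shows "Leb_norm a f \<le> fofana_norm (\<lambda>_. a) \<infinity> (ennreal a) f"
  unfolding fofana_norm_const_exponent[OF assms]
proof (rule Leb_norm_le_if_balls_le[OF f \<open>a > 0\<close>])
  fix n :: nat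
  have "Leb_norm a (\<lambda>x. f x * indicator (ball 0 (real n)) x)
      \<le> esssup lebesgue (\<lambda>y. Leb_norm a (\<lambda>x. f x * indicator (ball y (real n + 1)) x))"
  proof (rule le_esssupI)
    show "ball 0 1 \<in> sets lebesgue" "emeasure lebesgue (ball (0::'a) 1) \<noteq> 0"
      using content_ball_pos[of 1 "0::'a"] by (auto simp: measure_def)
    fix y :: 'a
    assume "y \<in> ball 0 1"
    have "ball 0 (real n) \<subseteq> ball y (real n + 1)"
    proof
      fix x :: 'a
      assume "x \<in> ball 0 (real n)"
      with \<open>y \<in> ball 0 1\<close> show "x \<in> ball y (real n + 1)"
        using norm_triangle_ineq4[of y x] by (simp add: dist_norm)
    qed
    then show "Leb_norm a (\<lambda>x. f x * indicator (ball 0 (real n)) x)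
        \<le> Leb_norm a (\<lambda>x. f x * indicator (ball y (real n + 1)) x)"
      using \<open>a > 0\<close> by (intro Leb_norm_mono) (auto simp: indicator_def)
  qed
  also have "\<dots> \<le> (SUP r\<in>{0<..}. esssup lebesgue (\<lambda>y. Leb_norm a (\<lambda>x. f x * indicator (ball y r) x)))"
    by (rule SUP_upper) simp
  finally show "Leb_norm a (\<lambda>x. f x * indicator (ball 0 (real n)) x)
      \<le> (SUP r\<in>{0<..}. esssup lebesgue (\<lambda>y. Leb_norm a (\<lambda>x. f x * indicator (ball y r) x)))" .
qed

lemma fofana_norm_const_exponent_eq_Leb_norm:
  assumes "f \<in> borel_measurable lebesgue" "a > 0"
  shows "fofana_norm (\<lambda>_. a) \<infinity> (ennreal a) f = Leb_norm a f"
  using fofana_norm_const_exponent_le_Leb_norm[OF assms] Leb_norm_le_fofana_norm_const_exponent[OF assms]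
  by (rule antisym)

lemma fofana_space_const_exponent_eq_Leb_space:
  assumes "a > 0"
  shows "fofana_space (\<lambda>_. a) \<infinity> (ennreal a) = Leb_space a"
proof (intro antisym subsetI)
  fix f :: "'a::euclidean_space \<Rightarrow> real"
  assume "f \<in> fofana_space (\<lambda>_. a) \<infinity> (ennreal a)"
  then show "f \<in> Leb_space a"
    using fofana_norm_const_exponent_eq_Leb_norm[OF _ assms, of f]
    by (auto simp: fofana_space_def var_Lp_loc_def Leb_space_def Leb_norm_def less_top[symmetric])
next
  fix f :: "'a::euclidean_space \<Rightarrow> real"
  assume "f \<in> Leb_space a"
  with Leb_space_subset_var_Lp_loc[OF assms] show "f \<in> fofana_space (\<lambda>_. a) \<infinity> (ennreal a)"
    using fofana_norm_const_exponent_eq_Leb_norm[OF _ assms, of f]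
    by (auto simp: fofana_space_def Leb_space_def Leb_norm_def less_top[symmetric])
qed

theorem proposition2p1:
  fixes p :: "'a::euclidean_space \<Rightarrow> real" and q \<alpha> :: ennreal
  assumes p_meas: "p \<in> borel_measurable lebesgue"
    and p_ge1: "\<And>x. 1 \<le> p x"
    and q_ge1: "1 \<le> q" and \<alpha>_ge1: "1 \<le> \<alpha>"
  shows "((\<forall>x. ennreal (p x) \<le> \<alpha>) \<and> \<alpha> \<le> q \<longrightarrow>
           fofana_space p q \<alpha> \<subseteq> amalgam_space p q \<and>
           (\<exists>C::real. C > 0 \<and> (\<forall>f \<in> fofana_space p q \<alpha>.
               amalgam_norm p q f \<le> ennreal C * fofana_norm p q \<alpha> f)))
       \<and> ((\<forall>x. ennreal (p x) = \<alpha>) \<and> q = \<infinity> \<longrightarrow>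
           fofana_space p q \<alpha> = Leb_space (enn2real \<alpha>) \<and>
           (\<forall>f \<in> fofana_space p q \<alpha>. fofana_norm p q \<alpha> f = Leb_norm (enn2real \<alpha>) f))"
proof (intro conjI impI)
  show "fofana_space p q \<alpha> \<subseteq> amalgam_space p q"
    using p_meas p_ge1 q_ge1 \<alpha>_ge1 by (rule fofana_space_subset_amalgam_space)
  show "\<exists>C::real. C > 0 \<and> (\<forall>f \<in> fofana_space p q \<alpha>. amalgam_norm p q f \<le> ennreal C * fofana_norm p q \<alpha> f)"
    using amalgam_norm_le_fofana_norm[of p q \<alpha>, OF p_meas p_ge1 q_ge1 \<alpha>_ge1] by blast
next
  assume const: "(\<forall>x. ennreal (p x) = \<alpha>) \<and> q = \<infinity>"
  then have \<alpha>_p: "\<alpha> = ennreal (p x)" for x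
    by simp
  define a where "a = p 0"
  have "p x = a" for x
    using \<alpha>_p[of x] \<alpha>_p[of 0] p_ge1[of x] p_ge1[of 0] by (simp add: a_def)
  then have "p = (\<lambda>_. a)" "\<alpha> = ennreal a" "a > 0"
    using \<alpha>_p[of 0] p_ge1[of 0] by (auto simp: a_def)
  then show "fofana_space p q \<alpha> = Leb_space (enn2real \<alpha>)"
       and "\<forall>f \<in> fofana_space p q \<alpha>. fofana_norm p q \<alpha> f = Leb_norm (enn2real \<alpha>) f"
    using fofana_space_const_exponent_eq_Leb_space fofana_norm_const_exponent_eq_Leb_norm const
    by (auto simp: fofana_space_def var_Lp_loc_def)
qed

end
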